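(* Let $a\in\mathbb{C}$ and let $\mathcal{DC}_a=\{(z,\,az+\tfrac{1}{z})\in\mathbb{C}^2 : z\in\mathbb{C}\setminus\{0\}\}\subset\mathbb{C}^2\cong\mathbb{R}^4$. Then the only smooth simple closed curves on $\mathcal{DC}_a$ that lie in a $2$-dimensional affine plane of $\mathbb{R}^4$ are the images of the circles $\{z=re^{i\theta}: 0\le\theta\le 2\pi\}$, $r>0$, under the map $z\mapsto (z,az+1/z)$.
   Context: $\mathbb{C}^2$ is identified with $\mathbb{R}^4$ via $(z,w)\leftrightarrow(\mathrm{Re}\,z,\mathrm{Im}\,z,\mathrm{Re}\,w,\mathrm{Im}\,w)$. *)

theory Defs
  imports "HOL-Analysis.Analysis"
begin

text \<open>C^2 is the real vector space complex \<times> complex, identified with R^4 via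
  (z,w) \<mapsto> (Re z, Im z, Re w, Im w) (a real-linear isometry, so affine notions agree).\<close>

definition DC_map :: "complex \<Rightarrow> complex \<Rightarrow> complex \<times> complex" where
  "DC_map a z = (z, a * z + 1 / z)"

definition DC :: "complex \<Rightarrow> (complex \<times> complex) set" where
  "DC a = DC_map a ` (UNIV - {0})"

definition smooth_curve :: "(real \<Rightarrow> 'a::real_normed_vector) \<Rightarrow> bool" where
  "smooth_curve \<gamma> \<longleftrightarrow> (\<exists>D :: nat \<Rightarrow> real \<Rightarrow> 'a. D 0 = \<gamma> \<and>
      (\<forall>n t. (D n has_vector_derivative D (Suc n) t) (at t)))"

definition smooth_simple_closed_curve :: "(real \<Rightarrow> 'a::real_normed_vector) \<Rightarrow> bool" where
  "smooth_simple_closed_curve \<gamma> \<longleftrightarrow>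
     smooth_curve \<gamma> \<and>
     (\<forall>t. \<gamma> (t + 1) = \<gamma> t) \<and>
     inj_on \<gamma> {0..<1} \<and>
     (\<forall>t. vector_derivative \<gamma> (at t) \<noteq> 0)"

end

theory Submission
  imports Defs "HOL-Computational_Algebra.Polynomial"
begin

text \<open>
  On the plane, both coordinates \<open>z\<close> and \<open>w = a z + 1/z\<close> of the curve are real-affine functions
  of the two plane parameters. If the \<open>z\<close>-components of the two direction vectors are
  \<open>\<real>\<close>-collinear, the first coordinate of the curve runs inside a line in \<open>\<complex>\<close>, which a continuous
  injective closed curve cannot do. Otherwise \<open>w = \<alpha> z + \<beta> cnj z + c\<close>, so every \<open>z\<close> on the curve
  satisfies \<open>(\<alpha> - a) z\<^sup>2 + \<beta> |z|\<^sup>2 + c z = 1\<close>. Since \<open>|z|\<^sup>2\<close> is then a quadratic polynomial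
  in \<open>z\<close> which is real, conjugating it and substituting \<open>cnj z = |z|\<^sup>2 / z\<close> yields a quartic vanishing at
  the infinitely many points of the curve; its vanishing forces \<open>|z|\<^sup>2\<close> to be constant. Finally, an
  injective closed curve on a circle covers the whole circle, by the same no-injective-loop argument
  applied to its argument.
\<close>

lemma continuous_loop_not_inj_on:
  fixes g :: "real \<Rightarrow> real"
  assumes cont: "continuous_on {a..b} g" and "a < b" and loop: "g a = g b"
  shows "\<not> inj_on g {a..<b}"
proof
  assume inj: "inj_on g {a..<b}"
  define m where "m = (2*a + b) / 3"
  define c where "c = (a + 2*b) / 3"
  have "a < m" "m < c" "c < b" using \<open>a < b\<close> by (simp_all add: m_def c_def)
  have "inj_on g {a..c}"
    by (rule inj_on_subset[OF inj]) (use \<open>c < b\<close> in auto)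
  then have left: "(g a < g m \<and> g m < g c) \<or> (g c < g m \<and> g m < g a)"
    using \<open>a < m\<close> \<open>m < c\<close> \<open>c < b\<close> cont
    by (intro continuous_inj_imp_mono) (auto intro: continuous_on_subset)
  have "inj_on g {m..b}"
  proof (rule inj_onI)
    fix s t assume s: "s \<in> {m..b}" and t: "t \<in> {m..b}" and "g s = g t"
    have "g x \<noteq> g b" if "x \<in> {m..<b}" for x
      using inj_onD[OF inj, of x a] that loop \<open>a < m\<close> \<open>m < c\<close> \<open>c < b\<close> by force
    then show "s = t"
      using s t \<open>g s = g t\<close> inj_onD[OF inj, of s t] \<open>a < m\<close> by (cases "s = b"; cases "t = b") force+
  qed
  then have right: "(g m < g c \<and> g c < g b) \<or> (g b < g c \<and> g c < g m)"
    using \<open>a < m\<close> \<open>m < c\<close> \<open>c < b\<close> cont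
    by (intro continuous_inj_imp_mono) (auto intro: continuous_on_subset)
  show False using left right loop by linarith
qed

lemma closed_curve_not_in_line:
  fixes z :: "real \<Rightarrow> complex"
  assumes "continuous_on {a..b} z" "a < b" "z a = z b" "inj_on z {a..<b}"
    and "d \<noteq> 0" and line: "\<And>t. t \<in> {a..b} \<Longrightarrow> Im (cnj d * (z t - z0)) = 0"
  shows False
proof -
  define g where "g t = Re (cnj d * (z t - z0))" for t
  have "continuous_on {a..b} g"
    unfolding g_def by (intro continuous_intros assms(1))
  moreover have "inj_on g {a..<b}"
  proof (rule inj_onI)
    fix s t assume st: "s \<in> {a..<b}" "t \<in> {a..<b}" "g s = g t"
    then have "cnj d * (z s - z0) = cnj d * (z t - z0)"
      using line[of s] line[of t] by (simp add: g_def complex_eq_iff)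
    then show "s = t" using \<open>d \<noteq> 0\<close> st inj_onD[OF assms(4)] by simp
  qed
  ultimately show False
    using continuous_loop_not_inj_on \<open>a < b\<close> \<open>z a = z b\<close> by (metis g_def)
qed

lemma closed_curve_on_circle_covers_circle:
  fixes z :: "real \<Rightarrow> complex"
  assumes cont: "continuous_on {a..b} z" and "a < b" and "z a = z b" and inj: "inj_on z {a..<b}"
    and on_circle: "z ` {a..b} \<subseteq> sphere 0 r"
  shows "sphere 0 r \<subseteq> z ` {a..b}"
proof
  fix p :: complex assume p: "p \<in> sphere 0 r"
  show "p \<in> z ` {a..b}"
  proof (rule ccontr)
    assume missed: "p \<notin> z ` {a..b}"
    have "z a \<in> sphere 0 r" using on_circle \<open>a < b\<close> by (simp add: image_subset_iff)
    then have "p \<noteq> 0" using p missed \<open>a < b\<close> by (force simp: image_iff)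
    have unit: "norm (- z t / p) = 1" if "t \<in> {a..b}" for t
    proof -
      have "norm (z t) = r" using on_circle that by (auto simp: image_subset_iff)
      then show ?thesis using p \<open>p \<noteq> 0\<close> by (auto simp: norm_divide)
    qed
    \<comment> \<open>\<open>-z/p\<close> avoids the branch cut of \<open>Arg\<close>, which it would meet exactly where \<open>z = p\<close>.\<close>
    define g where "g t = Arg (- z t / p)" for t
    have "- z t / p \<notin> \<real>\<^sub>\<le>\<^sub>0" if "t \<in> {a..b}" for t
    proof
      assume "- z t / p \<in> \<real>\<^sub>\<le>\<^sub>0"
      then obtain q where q: "- z t / p = of_real q" "q \<le> 0" by (rule nonpos_Reals_cases)
      then have "q = -1" using unit[OF that] by (metis norm_of_real abs_of_nonpos minus_equation_iff)
      then show False using q(1) \<open>p \<noteq> 0\<close> missed that by (force simp: field_simps)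
    qed
    then have "continuous_on {a..b} g"
      unfolding g_def using \<open>p \<noteq> 0\<close>
      by (intro continuous_on_compose2[OF continuous_on_Arg, of _ "\<lambda>t. - z t / p"] continuous_intros cont) auto
    moreover have "inj_on g {a..<b}"
    proof (rule inj_onI)
      fix s t assume st: "s \<in> {a..<b}" "t \<in> {a..<b}" "g s = g t"
      then have "- z s / p = - z t / p"
        using Arg_eq[of "- z s / p"] Arg_eq[of "- z t / p"] unit[of s] unit[of t]
        by (force simp: g_def)
      then show "s = t" using \<open>p \<noteq> 0\<close> st inj_onD[OF inj] by simp
    qed
    ultimately show False
      using continuous_loop_not_inj_on \<open>a < b\<close> \<open>z a = z b\<close> by (metis g_def)
  qed
qed

lemma affine_aff_dim_2_parametrization:
  fixes P :: "'a::euclidean_space set"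
  assumes "affine P" "aff_dim P = 2"
  obtains p u v where "\<And>x. x \<in> P \<Longrightarrow> \<exists>s t. x = p + s *\<^sub>R u + t *\<^sub>R v"
proof -
  obtain p where p: "p \<in> P" using assms(2) by fastforce
  define S where "S = (+) (- p) ` P"
  have "aff_dim P = int (dim S)" unfolding S_def
    by (rule aff_dim_eq_dim) (simp add: hull_inc p)
  then have "dim S = 2" using assms(2) by simp
  obtain B where B: "B \<subseteq> S" "independent B" "S \<subseteq> span B" "card B = dim S"
    using basis_exists by blast
  with \<open>dim S = 2\<close> obtain u v where "B = {u, v}" by (metis card_2_iff)
  have "\<exists>s t. x = p + s *\<^sub>R u + t *\<^sub>R v" if "x \<in> P" for x
  proof -
    have "- p + x \<in> span {u, v}" using B(3) \<open>B = {u, v}\<close> that unfolding S_def by auto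
    then obtain s t where "- p + x - s *\<^sub>R u - t *\<^sub>R v = 0"
      unfolding span_insert span_singleton by auto
    then have "x = p + s *\<^sub>R u + t *\<^sub>R v" by (simp add: algebra_simps)
    then show ?thesis by blast
  qed
  then show thesis using that by blast
qed

lemma Im_cnj_mult_eq_0_imp_real_line:
  fixes u v :: complex
  assumes "Im (cnj u * v) = 0"
  obtains d where "d \<noteq> 0" and "\<And>s t :: real. Im (cnj d * (of_real s * u + of_real t * v)) = 0"
proof -
  have "Im (cnj d * (of_real s * u + of_real t * v)) = 0"
    if "d = (if u \<noteq> 0 then u else if v \<noteq> 0 then v else 1)" for d and s t :: real
    using that assms by (auto simp: algebra_simps)
  then show thesis using that by (metis one_neq_zero)
qed

lemma real_affine_map_complex_form:
  fixes u1 v1 u2 v2 z0 w0 :: complex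
  assumes "Im (cnj u1 * v1) \<noteq> 0"
  obtains \<alpha> \<beta> c where "\<And>s t :: real.
    w0 + of_real s * u2 + of_real t * v2
      = \<alpha> * (z0 + of_real s * u1 + of_real t * v1) + \<beta> * cnj (z0 + of_real s * u1 + of_real t * v1) + c"
proof -
  define \<Delta> where "\<Delta> = u1 * cnj v1 - cnj u1 * v1"
  have "\<Delta> \<noteq> 0"
  proof
    assume "\<Delta> = 0"
    then have "Im (u1 * cnj v1) = Im (cnj u1 * v1)" unfolding \<Delta>_def by simp
    then show False using assms by simp
  qed
  \<comment> \<open>Cramer's rule for \<open>\<alpha> u1 + \<beta> cnj u1 = u2\<close>, \<open>\<alpha> v1 + \<beta> cnj v1 = v2\<close>.\<close>
  define \<alpha> where "\<alpha> = (u2 * cnj v1 - v2 * cnj u1) / \<Delta>"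
  define \<beta> where "\<beta> = (u1 * v2 - v1 * u2) / \<Delta>"
  have \<alpha>\<Delta>: "\<alpha> * \<Delta> = u2 * cnj v1 - v2 * cnj u1" and \<beta>\<Delta>: "\<beta> * \<Delta> = u1 * v2 - v1 * u2"
    using \<open>\<Delta> \<noteq> 0\<close> by (simp_all add: \<alpha>_def \<beta>_def)
  have "(\<alpha> * u1 + \<beta> * cnj u1) * \<Delta> = u1 * (\<alpha> * \<Delta>) + cnj u1 * (\<beta> * \<Delta>)"
    and "(\<alpha> * v1 + \<beta> * cnj v1) * \<Delta> = v1 * (\<alpha> * \<Delta>) + cnj v1 * (\<beta> * \<Delta>)"
    by (simp_all add: algebra_simps)
  then have "(\<alpha> * u1 + \<beta> * cnj u1) * \<Delta> = u2 * \<Delta>" and "(\<alpha> * v1 + \<beta> * cnj v1) * \<Delta> = v2 * \<Delta>"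
    unfolding \<alpha>\<Delta> \<beta>\<Delta> by (simp_all add: \<Delta>_def algebra_simps)
  then have u: "\<alpha> * u1 + \<beta> * cnj u1 = u2" and v: "\<alpha> * v1 + \<beta> * cnj v1 = v2"
    using \<open>\<Delta> \<noteq> 0\<close> by simp_all
  have "w0 + of_real s * u2 + of_real t * v2
      = \<alpha> * (z0 + of_real s * u1 + of_real t * v1) + \<beta> * cnj (z0 + of_real s * u1 + of_real t * v1)
        + (w0 - \<alpha> * z0 - \<beta> * cnj z0)" for s t :: real
    by (simp add: u[symmetric] v[symmetric] algebra_simps)
  then show thesis using that by blast
qed

lemma poly_eq_0_if_vanishes_on_infinite:
  fixes q :: "'a::{comm_ring_1,ring_no_zero_divisors} poly"
  assumes "infinite Z" and "\<And>z. z \<in> Z \<Longrightarrow> poly q z = 0"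
  shows "q = 0"
  using assms poly_roots_finite[of q] finite_subset[of Z "{x. poly q x = 0}"] by blast

lemma quadratic_norm_square_imp_quartic:
  fixes z a0 a1 a2 :: complex
  defines "p \<equiv> a2 * z^2 + a1 * z + a0"
  assumes "z \<noteq> 0" and "z * cnj z = p"
  shows "z^2 * p - cnj a2 * p^2 - cnj a1 * z * p - cnj a0 * z^2 = 0"
proof -
  \<comment> \<open>\<open>p\<close> is real, so \<open>p = cnj p\<close>; substituting \<open>cnj z = p / z\<close> eliminates \<open>cnj z\<close>.\<close>
  have "cnj p = p" using assms(3) by (metis complex_cnj_cnj complex_cnj_mult mult.commute)
  moreover have "cnj z = p / z" using assms(2,3) by (simp add: field_simps)
  ultimately have "cnj a2 * (p / z)^2 + cnj a1 * (p / z) + cnj a0 = p"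
    unfolding p_def by simp
  moreover have "z^2 * (cnj a2 * (p / z)^2 + cnj a1 * (p / z) + cnj a0)
      = cnj a2 * p^2 + cnj a1 * z * p + cnj a0 * z^2"
    using assms(2) by (simp add: field_simps power2_eq_square)
  ultimately show ?thesis by (metis diff_diff_eq diff_self)
qed

lemma infinite_conic_solutions_on_circle:
  fixes Z :: "complex set" and A B c :: complex
  assumes "infinite Z" and Z: "\<And>z. z \<in> Z \<Longrightarrow> z \<noteq> 0 \<and> A * z^2 + B * (z * cnj z) + c * z = 1"
  shows "\<exists>r>0. Z \<subseteq> sphere 0 r"
proof -
  note vanish = poly_eq_0_if_vanishes_on_infinite[OF \<open>infinite Z\<close>]
  have "B \<noteq> 0"
  proof
    assume "B = 0"
    then have "[:-1, c, A:] = 0"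
      using Z by (intro vanish) (auto simp: algebra_simps power2_eq_square)
    then show False by simp
  qed
  define a2 a1 a0 where "a2 = - A / B" and "a1 = - c / B" and "a0 = 1 / B"
  have norm_square: "z * cnj z = a2 * z^2 + a1 * z + a0" if "z \<in> Z" for z
    using Z[OF that] \<open>B \<noteq> 0\<close> unfolding a2_def a1_def a0_def by (auto simp: field_simps)
  define q where "q = [: - cnj a2 * a0^2, - 2 * cnj a2 * a1 * a0 - cnj a1 * a0,
      a0 - cnj a2 * (a1^2 + 2 * a2 * a0) - cnj a1 * a1 - cnj a0,
      a1 - 2 * cnj a2 * a2 * a1 - cnj a1 * a2, a2 - cnj a2 * a2^2 :]"
  have "poly q z = (let p = a2 * z^2 + a1 * z + a0 in
      z^2 * p - cnj a2 * p^2 - cnj a1 * z * p - cnj a0 * z^2)" for z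
    unfolding q_def by (simp add: algebra_simps power2_eq_square power3_eq_cube power4_eq_xxxx)
  then have "q = 0"
    using quadratic_norm_square_imp_quartic norm_square Z by (intro vanish) (simp add: Let_def)
  then have "a2 = 0" "a1 = 0" using \<open>B \<noteq> 0\<close> unfolding q_def a0_def by auto
  have "norm z ^ 2 = norm (1 / B)" if "z \<in> Z" for z
  proof -
    have "complex_of_real (norm z ^ 2) = z * cnj z" by (fact complex_norm_square)
    also have "\<dots> = 1 / B" using norm_square[OF that] by (simp add: a0_def \<open>a2 = 0\<close> \<open>a1 = 0\<close>)
    finally show ?thesis by (metis norm_of_real abs_of_nonneg zero_le_power2)
  qed
  then have "Z \<subseteq> sphere 0 (sqrt (norm (1 / B)))"
    by (metis mem_sphere_0 norm_ge_zero real_sqrt_unique subsetI)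
  then show ?thesis using \<open>B \<noteq> 0\<close> by (intro exI[of _ "sqrt (norm (1 / B))"]) simp
qed

lemma smooth_curve_imp_continuous:
  assumes "smooth_curve \<gamma>"
  shows "continuous_on S \<gamma>"
proof -
  obtain D where "D 0 = \<gamma>" "\<And>n t. (D n has_vector_derivative D (Suc n) t) (at t)"
    using assms unfolding smooth_curve_def by blast
  then have "isCont \<gamma> t" for t by (metis has_vector_derivative_continuous)
  then show ?thesis by (simp add: continuous_at_imp_continuous_on)
qed


lemma DC_memD:
  assumes "x \<in> DC a"
  shows "x = DC_map a (fst x)" and "fst x \<noteq> 0"
  using assms by (auto simp: DC_def DC_map_def)


lemma DC_closed_curve_in_plane_on_circle:
  fixes z :: "real \<Rightarrow> complex" and P :: "(complex \<times> complex) set"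
  assumes cont: "continuous_on {0..1} z" and loop: "z 0 = z 1" and inj: "inj_on z {0..<1}"
    and nonzero: "\<And>t. z t \<noteq> 0"
    and "affine P" and "aff_dim P = 2" and in_P: "\<And>t. DC_map a (z t) \<in> P"
  shows "\<exists>r>0. range z \<subseteq> sphere 0 r"
proof -
  obtain p u v where param: "\<And>x. x \<in> P \<Longrightarrow> \<exists>s t. x = p + s *\<^sub>R u + t *\<^sub>R v"
    using affine_aff_dim_2_parametrization \<open>affine P\<close> \<open>aff_dim P = 2\<close> by blast
  have coords: "\<exists>s t :: real. z x = fst p + of_real s * fst u + of_real t * fst v \<and>
      a * z x + 1 / z x = snd p + of_real s * snd u + of_real t * snd v" for x
  proof -
    obtain s t where e: "DC_map a (z x) = p + s *\<^sub>R u + t *\<^sub>R v" using param[OF in_P[of x]] by blast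
    show ?thesis
      using arg_cong[OF e, of fst] arg_cong[OF e, of snd] by (auto simp: DC_map_def scaleR_conv_of_real)
  qed
  show ?thesis
  proof (cases "Im (cnj (fst u) * fst v) = 0")
    case True
    then obtain d where "d \<noteq> 0"
      and line: "\<And>s t :: real. Im (cnj d * (of_real s * fst u + of_real t * fst v)) = 0"
      using Im_cnj_mult_eq_0_imp_real_line by blast
    have "Im (cnj d * (z x - fst p)) = 0" for x
    proof -
      obtain s t :: real where "z x = fst p + of_real s * fst u + of_real t * fst v"
        using coords[of x] by blast
      then show ?thesis using line[of s t] by (simp add: add.assoc)
    qed
    then show ?thesis
      using closed_curve_not_in_line[OF cont zero_less_one loop inj \<open>d \<noteq> 0\<close>, of "fst p"] by blast
  next
    case False
    then obtain \<alpha> \<beta> c where affine_form: "\<And>s t :: real.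
        snd p + of_real s * snd u + of_real t * snd v
        = \<alpha> * (fst p + of_real s * fst u + of_real t * fst v)
          + \<beta> * cnj (fst p + of_real s * fst u + of_real t * fst v) + c"
      using real_affine_map_complex_form by blast
    have conic: "y \<noteq> 0 \<and> (\<alpha> - a) * y^2 + \<beta> * (y * cnj y) + c * y = 1" if y_in: "y \<in> range z" for y
    proof -
      obtain x where y: "y = z x" using y_in by blast
      obtain s t :: real where "y = fst p + of_real s * fst u + of_real t * fst v"
        and "a * y + 1 / y = snd p + of_real s * snd u + of_real t * snd v"
        using coords[of x] y by blast
      then have "a * y + 1 / y = \<alpha> * y + \<beta> * cnj y + c" using affine_form[of s t] by simp
      then show ?thesis using nonzero y by (simp add: field_simps power2_eq_square)
    qed
    have "infinite (z ` {0..<1})"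
    proof
      assume "finite (z ` {0..<1})"
      then have "finite {0..<(1::real)}" using inj by (rule finite_imageD)
      then show False using infinite_Ico[of "0::real" 1] by simp
    qed
    then have "infinite (range z)"
      using infinite_super[of "z ` {0..<1}" "range z"] by blast
    then show ?thesis using infinite_conic_solutions_on_circle[OF _ conic] by blast
  qed
qed

theorem lemma2p1:
  fixes a :: complex and \<gamma> :: "real \<Rightarrow> complex \<times> complex"
  assumes "smooth_simple_closed_curve \<gamma>"
    and "range \<gamma> \<subseteq> DC a"
    and "\<exists>P :: (complex \<times> complex) set. affine P \<and> aff_dim P = 2 \<and> range \<gamma> \<subseteq> P"
  shows "\<exists>r>0. range \<gamma> = DC_map a ` sphere 0 r"
proof -
  obtain smooth: "smooth_curve \<gamma>" and periodic: "\<And>t. \<gamma> (t + 1) = \<gamma> t"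
    and "inj_on \<gamma> {0..<1}"
    using assms(1) unfolding smooth_simple_closed_curve_def by blast
  define z where "z t = fst (\<gamma> t)" for t
  have "\<gamma> t = DC_map a (z t)" and nonzero: "z t \<noteq> 0" for t
    using DC_memD[of "\<gamma> t" a] assms(2) by (auto simp: z_def)
  then have \<gamma>_eq: "\<gamma> = DC_map a \<circ> z" by (simp add: fun_eq_iff)
  have cont: "continuous_on {0..1} z"
    unfolding z_def by (intro continuous_on_fst smooth_curve_imp_continuous[OF smooth])
  have loop: "z 0 = z 1" using periodic[of 0] by (simp add: z_def)
  have inj: "inj_on z {0..<1}"
    using \<open>inj_on \<gamma> {0..<1}\<close> unfolding \<gamma>_eq by (rule inj_on_imageI2)
  obtain P where "affine P" "aff_dim P = 2" "range \<gamma> \<subseteq> P" using assms(3) by blast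
  then have "DC_map a (z t) \<in> P" for t unfolding \<gamma>_eq by auto
  then obtain r where "r > 0" and on_circle: "range z \<subseteq> sphere 0 r"
    using DC_closed_curve_in_plane_on_circle[OF cont loop inj nonzero \<open>affine P\<close> \<open>aff_dim P = 2\<close>]
    by blast
  have "sphere 0 r \<subseteq> z ` {0..1}"
    using on_circle by (intro closed_curve_on_circle_covers_circle[OF cont zero_less_one loop inj]) blast
  then have "range z = sphere 0 r" using on_circle by blast
  then have "range \<gamma> = DC_map a ` sphere 0 r" unfolding \<gamma>_eq image_comp[symmetric] by simp
  then show ?thesis using \<open>r > 0\<close> by blast
qed

end
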